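(* Let $L\in\mathbb R^{N\times N}$ be symmetric positive semidefinite. For $\ell=1,\dots,c$ let $P_\ell\in\mathbb R^{N_\ell\times N_{\ell-1}}$ ($N_0=N$) have full row rank with Moore–Penrose pseudoinverse $P_\ell^+$, and define $L_0=L$, $L_\ell=(P_\ell^+)^\top L_{\ell-1}P_\ell^+$, $\Pi_\ell=P_\ell^+P_\ell$, $\Pi_\ell^\perp=I-\Pi_\ell$, $\Pi=P_1^+\cdots P_c^+P_c\cdots P_1$ and $\Pi^\perp=I-\Pi$. Fix $x\in\mathbb R^N$ and set $x_0=x$, $x_\ell=P_\ell x_{\ell-1}$. If there are $\sigma_1,\dots,\sigma_c\ge0$ with $$\|\Pi_\ell^\perp x_{\ell-1}\|_{L_{\ell-1}}\le\sigma_\ell\|x_{\ell-1}\|_{L_{\ell-1}}\quad\text{for each }\ell\le c,$$ then $$\|\Pi^\perp x\|_L\le\Big(\sum_{\ell=1}^c\sigma_\ell\prod_{q=1}^{\ell-1}(1+\sigma_q)\Big)\|x\|_L=\Big(\prod_{\ell=1}^c(1+\sigma_\ell)-1\Big)\|x\|_L.$$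
   Context: For PSD $M$, $\|y\|_M=\sqrt{y^\top My}$. *)

theory Defs
  imports "Jordan_Normal_Form.Matrix" "Jordan_Normal_Form.DL_Rank"
begin

definition mp_pinv :: "real mat \<Rightarrow> real mat" where
  "mp_pinv A = (THE B. B \<in> carrier_mat (dim_col A) (dim_row A) \<and>
       A * B * A = A \<and> B * A * B = B \<and>
       transpose_mat (A * B) = A * B \<and> transpose_mat (B * A) = B * A)"

definition sym_psd :: "nat \<Rightarrow> real mat \<Rightarrow> bool" where
  "sym_psd n M \<longleftrightarrow> M \<in> carrier_mat n n \<and> transpose_mat M = M \<and>
       (\<forall>y \<in> carrier_vec n. y \<bullet> (M *\<^sub>v y) \<ge> 0)"

definition full_row_rank :: "real mat \<Rightarrow> bool" where
  "full_row_rank A \<longleftrightarrow> vec_space.rank (dim_row A) A = dim_row A"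

definition mnorm :: "real mat \<Rightarrow> real vec \<Rightarrow> real" where
  "mnorm M y = sqrt (y \<bullet> (M *\<^sub>v y))"

fun Lseq :: "real mat \<Rightarrow> (nat \<Rightarrow> real mat) \<Rightarrow> nat \<Rightarrow> real mat" where
  "Lseq L P 0 = L"
| "Lseq L P (Suc l) = transpose_mat (mp_pinv (P (Suc l))) * Lseq L P l * mp_pinv (P (Suc l))"

fun xseq :: "real vec \<Rightarrow> (nat \<Rightarrow> real mat) \<Rightarrow> nat \<Rightarrow> real vec" where
  "xseq x P 0 = x"
| "xseq x P (Suc l) = P (Suc l) *\<^sub>v xseq x P l"

fun Pdown :: "nat \<Rightarrow> (nat \<Rightarrow> real mat) \<Rightarrow> nat \<Rightarrow> real mat" where
  "Pdown N P 0 = 1\<^sub>m N"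
| "Pdown N P (Suc l) = P (Suc l) * Pdown N P l"

fun Pup :: "nat \<Rightarrow> (nat \<Rightarrow> real mat) \<Rightarrow> nat \<Rightarrow> real mat" where
  "Pup N P 0 = 1\<^sub>m N"
| "Pup N P (Suc l) = Pup N P l * mp_pinv (P (Suc l))"

end

theory Submission
  imports Defs
begin

text \<open>With U_k = P_1^+ \<cdots> P_k^+ one has \<Pi> x = U_c x_c and \<parallel>y\<parallel>_{L_k} = \<parallel>U_k y\<parallel>_L.
  The residuals r_k = x - U_k x_k satisfy r_{k+1} = r_k + U_k \<Pi>_{k+1}^\<perp> x_k, so the hypothesis
  and the triangle inequality (all norms in L) give
  \<parallel>r_{k+1}\<parallel> \<le> \<parallel>r_k\<parallel> + \<sigma>_{k+1} \<parallel>U_k x_k\<parallel> \<le> \<parallel>r_k\<parallel> + \<sigma>_{k+1} (\<parallel>x\<parallel> + \<parallel>r_k\<parallel>).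
  Hence \<parallel>r_k\<parallel> + \<parallel>x\<parallel> grows at most by the factor 1 + \<sigma>_{k+1} per level.\<close>

lemma (in vec_space) full_rank_mult_vec_surj:
  assumes A: "A \<in> carrier_mat n nc" and r: "rank A = n" and y: "y \<in> carrier_vec n"
  shows "\<exists>x \<in> carrier_vec nc. A *\<^sub>v x = y"
proof -
  obtain S where S: "maximal S (\<lambda>T. T \<subseteq> set (cols A) \<and> lin_indpt T)"
    using maximal_exists[of "(\<lambda>T. T \<subseteq> set (cols A) \<and> lin_indpt T)" "card (set (cols A))" "{}"]
    by (meson List.finite_set card_mono empty_iff empty_subsetI finite_lin_indpt2 rev_finite_subset)
  have card: "card S = n" using rank_card_indpt[OF A S] r by simp
  have S_cols: "S \<subseteq> set (cols A)" and li: "lin_indpt S" using S unfolding maximal_def by auto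
  have "set (cols A) \<subseteq> carrier_vec n" using cols_dim A carrier_matD(1) by blast
  hence S_carrier: "S \<subseteq> carrier_vec n" using S_cols by auto
  have fin: "finite S" using S_cols finite_subset by blast
  have "basis S" by (rule dim_li_is_basis[OF fin_dim fin S_carrier li], simp add: card dim_is_n)
  hence "span S = carrier_vec n" unfolding basis_def by auto
  moreover have "span S \<subseteq> span (set (cols A))" using S_cols by (rule span_is_monotone)
  ultimately have "y \<in> col_space A" unfolding col_space_def using y by auto
  thus ?thesis using col_space_eq[OF A] A by auto
qed

lemma full_row_rank_mult_vec_surj:
  assumes A: "A \<in> carrier_mat m n" and r: "full_row_rank A" and y: "y \<in> carrier_vec m"
  shows "\<exists>x \<in> carrier_vec n. A *\<^sub>v x = y"
  using vec_space.full_rank_mult_vec_surj[OF A _ y] r A unfolding full_row_rank_def by auto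

lemma scalar_prod_self_eq_0:
  fixes w :: "real vec"
  assumes "w \<in> carrier_vec n" and "w \<bullet> w = 0"
  shows "w = 0\<^sub>v n"
  using conjugate_square_eq_0_vec[OF assms(1)] assms(2) by simp

lemma full_row_rank_gram_det_nonzero:
  fixes A :: "real mat"
  assumes A: "A \<in> carrier_mat m n" and r: "full_row_rank A"
  shows "det (A * transpose_mat A) \<noteq> 0"
proof
  have At: "transpose_mat A \<in> carrier_mat n m" using A by simp
  assume "det (A * transpose_mat A) = 0"
  then obtain v where v: "v \<in> carrier_vec m" "v \<noteq> 0\<^sub>v m" "(A * transpose_mat A) *\<^sub>v v = 0\<^sub>v m"
    using det_0_iff_vec_prod_zero_field[of "A * transpose_mat A" m] A by auto
  define w where "w = transpose_mat A *\<^sub>v v"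
  have w: "w \<in> carrier_vec n" unfolding w_def using At v by simp
  have "w \<bullet> w = v \<bullet> (A *\<^sub>v w)"
    unfolding w_def by (rule transpose_vec_mult_scalar[OF A _ v(1)], simp add: w[unfolded w_def])
  also have "A *\<^sub>v w = 0\<^sub>v m" unfolding w_def using A At v by simp
  finally have "w = 0\<^sub>v n" using scalar_prod_self_eq_0 w v by simp
  \<comment> \<open>Since \<open>A\<close> is onto, \<open>v\<close> is orthogonal to all of \<open>\<real>\<^sup>m\<close>.\<close>
  obtain z where z: "z \<in> carrier_vec n" "A *\<^sub>v z = v" using full_row_rank_mult_vec_surj[OF A r v(1)] by auto
  have "v \<bullet> v = w \<bullet> z"
    unfolding w_def using transpose_vec_mult_scalar[OF A z(1) v(1)] z(2) by simp
  with \<open>w = 0\<^sub>v n\<close> z have "v \<bullet> v = 0" by simp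
  with v show False using scalar_prod_self_eq_0 by blast
qed

lemma moore_penrose_unique:
  fixes A B C :: "real mat"
  assumes A: "A \<in> carrier_mat m n" and B: "B \<in> carrier_mat n m" and C: "C \<in> carrier_mat n m"
    and B1: "A*B*A = A" and B2: "B*A*B = B" and B3: "transpose_mat (A*B) = A*B"
    and B4: "transpose_mat (B*A) = B*A"
    and C1: "A*C*A = A" and C2: "C*A*C = C" and C3: "transpose_mat (A*C) = A*C"
    and C4: "transpose_mat (C*A) = C*A"
  shows "B = C"
proof -
  have At: "transpose_mat A \<in> carrier_mat n m" using A by simp
  have Bt: "transpose_mat B \<in> carrier_mat m n" using B by simp
  have ACA_left: "transpose_mat (A*C*A) = transpose_mat A * (A*C)"
    using transpose_mult[of "A*C" m m A n] A C C3 by simp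
  have ACA_right: "transpose_mat (A*C*A) = (C*A) * transpose_mat A"
    using transpose_mult[of A m n "C*A" n] A C C4 by (simp add: assoc_mult_mat[OF A C A])
  have AB: "A*B = A*C"
  proof -
    have "A*B = transpose_mat B * transpose_mat A" using B3 transpose_mult[OF A B] by simp
    also have "\<dots> = transpose_mat B * (transpose_mat A * (A*C))" using ACA_left C1 by simp
    also have "\<dots> = (transpose_mat B * transpose_mat A) * (A*C)"
      using assoc_mult_mat[OF Bt At mult_carrier_mat[OF A C]] by simp
    also have "\<dots> = (A*B) * (A*C)" using B3 transpose_mult[OF A B] by simp
    also have "\<dots> = (A*B*A)*C" using assoc_mult_mat[OF mult_carrier_mat[OF A B] A C] by simp
    finally show ?thesis using B1 by simp
  qed
  have BA: "B*A = C*A"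
  proof -
    have "B*A = transpose_mat A * transpose_mat B" using B4 transpose_mult[OF B A] by simp
    also have "\<dots> = ((C*A) * transpose_mat A) * transpose_mat B" using ACA_right C1 by simp
    also have "\<dots> = (C*A) * (transpose_mat A * transpose_mat B)"
      using assoc_mult_mat[OF mult_carrier_mat[OF C A] At Bt] by simp
    also have "\<dots> = (C*A) * (B*A)" using B4 transpose_mult[OF B A] by simp
    also have "\<dots> = C*(A*B*A)"
      using assoc_mult_mat[OF C A mult_carrier_mat[OF B A]] assoc_mult_mat[OF A B A] by simp
    finally show ?thesis using B1 by simp
  qed
  have "B = B*(A*B)" using B2 assoc_mult_mat[OF B A B] by simp
  also have "\<dots> = (B*A)*C" using AB assoc_mult_mat[OF B A C] by simp
  also have "\<dots> = C" using BA C2 by simp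
  finally show ?thesis .
qed

text \<open>For full row rank the pseudoinverse is \<open>A\<^sup>T (A A\<^sup>T)\<^sup>-\<^sup>1\<close>.\<close>

lemma moore_penrose_exists_full_row_rank:
  fixes A :: "real mat"
  assumes A: "A \<in> carrier_mat m n" and r: "full_row_rank A"
  shows "\<exists>B. B \<in> carrier_mat n m \<and> A*B*A = A \<and> B*A*B = B \<and>
       transpose_mat (A*B) = A*B \<and> transpose_mat (B*A) = B*A"
proof -
  define G where "G = A * transpose_mat A"
  have At: "transpose_mat A \<in> carrier_mat n m" using A by simp
  have G: "G \<in> carrier_mat m m" unfolding G_def using A by simp
  from det_non_zero_imp_unit[OF G full_row_rank_gram_det_nonzero[OF A r, folded G_def], of "()"]
  obtain Gi where Gi: "Gi \<in> carrier_mat m m" "Gi * G = 1\<^sub>m m" "G * Gi = 1\<^sub>m m"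
    unfolding Units_def ring_mat_def by auto
  have G_sym: "transpose_mat G = G" unfolding G_def using transpose_mult[OF A At] by simp
  have Gi_sym: "transpose_mat Gi = Gi"
  proof -
    have Git: "transpose_mat Gi \<in> carrier_mat m m" using Gi(1) by simp
    have "transpose_mat Gi * G = 1\<^sub>m m"
      using arg_cong[OF Gi(3), of transpose_mat] transpose_mult[OF G Gi(1)] G_sym by simp
    moreover have "(transpose_mat Gi * G) * Gi = transpose_mat Gi"
      using assoc_mult_mat[OF Git G Gi(1)] Gi(3) Git by simp
    ultimately show ?thesis using Gi(1) by simp
  qed
  define B where "B = transpose_mat A * Gi"
  have B: "B \<in> carrier_mat n m" unfolding B_def using At Gi by simp
  have AB: "A * B = 1\<^sub>m m" unfolding B_def
    using assoc_mult_mat[OF A At Gi(1)] Gi(3) unfolding G_def by simp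
  have BA_sym: "transpose_mat (B*A) = B*A"
  proof -
    have "transpose_mat (B*A) = transpose_mat A * transpose_mat B" using transpose_mult[OF B A] .
    also have "transpose_mat B = transpose_mat Gi * A" unfolding B_def
      using transpose_mult[OF At Gi(1)] by simp
    also have "transpose_mat A * (transpose_mat Gi * A) = B * A" unfolding B_def Gi_sym
      using assoc_mult_mat[OF At Gi(1) A] by simp
    finally show ?thesis .
  qed
  show ?thesis
    using B AB BA_sym A assoc_mult_mat[OF B A B] by (intro exI[of _ B]) simp
qed

lemma mp_pinv_carrier:
  fixes A :: "real mat"
  assumes A: "A \<in> carrier_mat m n" and r: "full_row_rank A"
  shows "mp_pinv A \<in> carrier_mat n m"
proof -
  let ?penrose = "\<lambda>B. B \<in> carrier_mat (dim_col A) (dim_row A) \<and>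
       A * B * A = A \<and> B * A * B = B \<and>
       transpose_mat (A * B) = A * B \<and> transpose_mat (B * A) = B * A"
  have dims: "dim_col A = n" "dim_row A = m" using A by auto
  obtain B where "?penrose B"
    using moore_penrose_exists_full_row_rank[OF A r] dims by auto
  moreover have "C = B" if "?penrose C" for C
    using moore_penrose_unique[OF A, of C B] that \<open>?penrose B\<close> dims by auto
  ultimately have "\<exists>!B. ?penrose B" by blast
  from theI'[OF this] show ?thesis unfolding mp_pinv_def using dims by simp
qed

lemma quadratic_nonneg_imp_discriminant_le:
  fixes a b c :: real
  assumes nonneg: "\<And>t. a + 2*t*b + t*t*c \<ge> 0" and c: "c \<ge> 0"
  shows "b*b \<le> a*c"
proof (cases "c = 0")
  case True
  show ?thesis
  proof (cases "b = 0")
    case False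
    have "a + 2*(-(a+1)/(2*b))*b + (-(a+1)/(2*b))*(-(a+1)/(2*b))*c \<ge> 0" by (rule nonneg)
    with True False show ?thesis by (simp add: field_simps)
  qed (use True in simp)
next
  case False
  with c have c_pos: "c > 0" by simp
  have "a + 2*(-b/c)*b + (-b/c)*(-b/c)*c \<ge> 0" by (rule nonneg)
  thus ?thesis using c_pos by (simp add: field_simps)
qed

lemma sym_psd_carrier: "sym_psd N L \<Longrightarrow> L \<in> carrier_mat N N"
  unfolding sym_psd_def by simp

lemma sym_psd_nonneg: "sym_psd N L \<Longrightarrow> a \<in> carrier_vec N \<Longrightarrow> a \<bullet> (L *\<^sub>v a) \<ge> 0"
  unfolding sym_psd_def by simp

lemma sym_psd_scalar_prod_commute:
  assumes L: "sym_psd N L" and a: "a \<in> carrier_vec N" and b: "b \<in> carrier_vec N"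
  shows "a \<bullet> (L *\<^sub>v b) = b \<bullet> (L *\<^sub>v a)"
proof -
  have Lc: "L \<in> carrier_mat N N" and Lt: "transpose_mat L = L" using L unfolding sym_psd_def by auto
  have "(transpose_mat L *\<^sub>v b) \<bullet> a = b \<bullet> (L *\<^sub>v a)" by (rule transpose_vec_mult_scalar[OF Lc a b])
  moreover have "(L *\<^sub>v b) \<bullet> a = a \<bullet> (L *\<^sub>v b)" using Lc a b by (intro comm_scalar_prod) auto
  ultimately show ?thesis using Lt by simp
qed

lemma sym_psd_quadratic_form_add_smult:
  assumes L: "sym_psd N L" and a: "a \<in> carrier_vec N" and b: "b \<in> carrier_vec N"
  shows "(a + t \<cdot>\<^sub>v b) \<bullet> (L *\<^sub>v (a + t \<cdot>\<^sub>v b)) =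
     a \<bullet> (L *\<^sub>v a) + 2*t*(a \<bullet> (L *\<^sub>v b)) + t*t*(b \<bullet> (L *\<^sub>v b))"
proof -
  have Lc: "L \<in> carrier_mat N N" using L by (rule sym_psd_carrier)
  have tb: "t \<cdot>\<^sub>v b \<in> carrier_vec N" using b by simp
  have La: "L *\<^sub>v a \<in> carrier_vec N" and Lb: "L *\<^sub>v b \<in> carrier_vec N" using Lc a b by auto
  have "L *\<^sub>v (a + t \<cdot>\<^sub>v b) = L *\<^sub>v a + t \<cdot>\<^sub>v (L *\<^sub>v b)"
    using mult_add_distrib_mat_vec[OF Lc a tb] mult_mat_vec[OF Lc b] by simp
  hence "(a + t \<cdot>\<^sub>v b) \<bullet> (L *\<^sub>v (a + t \<cdot>\<^sub>v b)) =
     a \<bullet> (L *\<^sub>v a) + t*(a \<bullet> (L *\<^sub>v b)) + t*(b \<bullet> (L *\<^sub>v a)) + t*t*(b \<bullet> (L *\<^sub>v b))"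
    using a b La Lb tb
    by (simp add: add_scalar_prod_distrib[of _ N] scalar_prod_add_distrib[of _ N] algebra_simps)
  thus ?thesis using sym_psd_scalar_prod_commute[OF L b a] by simp
qed

lemma sym_psd_cauchy_schwarz:
  assumes L: "sym_psd N L" and a: "a \<in> carrier_vec N" and b: "b \<in> carrier_vec N"
  shows "a \<bullet> (L *\<^sub>v b) \<le> mnorm L a * mnorm L b"
proof -
  let ?A = "a \<bullet> (L *\<^sub>v a)" and ?B = "a \<bullet> (L *\<^sub>v b)" and ?C = "b \<bullet> (L *\<^sub>v b)"
  have "?A + 2*t*?B + t*t*?C \<ge> 0" for t
    using sym_psd_nonneg[OF L, of "a + t \<cdot>\<^sub>v b"] sym_psd_quadratic_form_add_smult[OF L a b] a b
    by simp
  hence "?B * ?B \<le> ?A * ?C"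
    using quadratic_nonneg_imp_discriminant_le sym_psd_nonneg[OF L b] by blast
  hence "?B \<le> sqrt (?A * ?C)" by (metis abs_ge_self order_trans real_sqrt_abs2 real_sqrt_le_mono)
  thus ?thesis unfolding mnorm_def by (simp add: real_sqrt_mult)
qed

lemma mnorm_add_le:
  assumes L: "sym_psd N L" and a: "a \<in> carrier_vec N" and b: "b \<in> carrier_vec N"
  shows "mnorm L (a + b) \<le> mnorm L a + mnorm L b"
proof -
  have A: "a \<bullet> (L *\<^sub>v a) \<ge> 0" and C: "b \<bullet> (L *\<^sub>v b) \<ge> 0" using sym_psd_nonneg L a b by auto
  have "(a + b) \<bullet> (L *\<^sub>v (a + b)) = (mnorm L a)^2 + 2*(a \<bullet> (L *\<^sub>v b)) + (mnorm L b)^2"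
    using sym_psd_quadratic_form_add_smult[OF L a b, of 1] a b A C unfolding mnorm_def by simp
  also have "\<dots> \<le> (mnorm L a + mnorm L b)^2"
    using sym_psd_cauchy_schwarz[OF L a b] by (simp add: power2_sum)
  finally have "sqrt ((a + b) \<bullet> (L *\<^sub>v (a + b))) \<le> sqrt ((mnorm L a + mnorm L b)^2)"
    by (rule real_sqrt_le_mono)
  with A C show ?thesis unfolding mnorm_def by simp
qed

lemma mnorm_uminus:
  assumes L: "L \<in> carrier_mat N N" and a: "a \<in> carrier_vec N"
  shows "mnorm L (- a) = mnorm L a"
proof -
  have "L *\<^sub>v (- a) = - (L *\<^sub>v a)" using L a by (intro eq_vecI) auto
  thus ?thesis unfolding mnorm_def using L a by simp
qed

lemma quadratic_form_transpose_mult_mult: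
  fixes A M :: "'a :: comm_ring mat"
  assumes A: "A \<in> carrier_mat n m" and M: "M \<in> carrier_mat n n" and y: "y \<in> carrier_vec m"
  shows "y \<bullet> ((transpose_mat A * M * A) *\<^sub>v y) = (A *\<^sub>v y) \<bullet> (M *\<^sub>v (A *\<^sub>v y))"
proof -
  have At: "transpose_mat A \<in> carrier_mat m n" using A by simp
  have Ay: "A *\<^sub>v y \<in> carrier_vec n" and MAy: "M *\<^sub>v (A *\<^sub>v y) \<in> carrier_vec n" using A M y by auto
  have "(transpose_mat A * M * A) *\<^sub>v y = transpose_mat A *\<^sub>v (M *\<^sub>v (A *\<^sub>v y))"
    using assoc_mult_mat_vec[OF mult_carrier_mat[OF At M] A y] assoc_mult_mat_vec[OF At M Ay] by simp
  hence "y \<bullet> ((transpose_mat A * M * A) *\<^sub>v y) = (transpose_mat A *\<^sub>v (M *\<^sub>v (A *\<^sub>v y))) \<bullet> y"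
    using comm_scalar_prod[OF y] At MAy by simp
  also have "\<dots> = (M *\<^sub>v (A *\<^sub>v y)) \<bullet> (A *\<^sub>v y)" by (rule transpose_vec_mult_scalar[OF A y MAy])
  also have "\<dots> = (A *\<^sub>v y) \<bullet> (M *\<^sub>v (A *\<^sub>v y))" by (rule comm_scalar_prod[OF MAy Ay])
  finally show ?thesis .
qed

lemma sum_mult_prod_Suc_eq_prod_minus_1:
  fixes \<sigma> :: "nat \<Rightarrow> 'a :: comm_ring_1"
  shows "(\<Sum>l = 1..c. \<sigma> l * (\<Prod>q = 1..l - 1. 1 + \<sigma> q)) = (\<Prod>l = 1..c. 1 + \<sigma> l) - 1"
proof (induction c)
  case (Suc c)
  have "(\<Sum>l = 1..Suc c. \<sigma> l * (\<Prod>q = 1..l - 1. 1 + \<sigma> q))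
      = (\<Sum>l = 1..c. \<sigma> l * (\<Prod>q = 1..l - 1. 1 + \<sigma> q)) + \<sigma> (Suc c) * (\<Prod>q = 1..c. 1 + \<sigma> q)"
    by (simp add: sum.cl_ivl_Suc)
  also have "\<dots> = (\<Prod>l = 1..Suc c. 1 + \<sigma> l) - 1" using Suc by (simp add: prod.cl_ivl_Suc algebra_simps)
  finally show ?case .
qed simp

locale coarsening_chain =
  fixes N c :: nat and dims :: "nat \<Rightarrow> nat" and P :: "nat \<Rightarrow> real mat" and L :: "real mat"
  assumes L_psd: "sym_psd N L"
    and dims_0: "dims 0 = N"
    and P_carrier: "\<And>l. l \<in> {1..c} \<Longrightarrow> P l \<in> carrier_mat (dims l) (dims (l - 1))"
    and P_full_row_rank: "\<And>l. l \<in> {1..c} \<Longrightarrow> full_row_rank (P l)"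
begin

lemma P_Suc_carrier: "k < c \<Longrightarrow> P (Suc k) \<in> carrier_mat (dims (Suc k)) (dims k)"
  using P_carrier[of "Suc k"] by simp

lemma pinv_Suc_carrier: "k < c \<Longrightarrow> mp_pinv (P (Suc k)) \<in> carrier_mat (dims k) (dims (Suc k))"
  using mp_pinv_carrier[OF P_Suc_carrier P_full_row_rank[of "Suc k"]] by simp

lemma Pdown_carrier: "k \<le> c \<Longrightarrow> Pdown N P k \<in> carrier_mat (dims k) N"
proof (induction k)
  case (Suc k)
  then show ?case using P_Suc_carrier[of k] by (auto intro: mult_carrier_mat)
qed (simp add: dims_0)

lemma Pup_carrier: "k \<le> c \<Longrightarrow> Pup N P k \<in> carrier_mat N (dims k)"
proof (induction k)
  case (Suc k)
  then show ?case using pinv_Suc_carrier[of k] by (auto intro: mult_carrier_mat)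
qed (simp add: dims_0)

lemma xseq_eq_Pdown: "x \<in> carrier_vec N \<Longrightarrow> k \<le> c \<Longrightarrow> xseq x P k = Pdown N P k *\<^sub>v x"
proof (induction k)
  case (Suc k)
  then show ?case using P_Suc_carrier[of k] Pdown_carrier[of k] by simp
qed simp

lemma xseq_carrier: "x \<in> carrier_vec N \<Longrightarrow> k \<le> c \<Longrightarrow> xseq x P k \<in> carrier_vec (dims k)"
  using xseq_eq_Pdown Pdown_carrier mult_mat_vec_carrier by metis

lemma Lseq_carrier: "k \<le> c \<Longrightarrow> Lseq L P k \<in> carrier_mat (dims k) (dims k)"
  by (induction k) (auto simp: dims_0 sym_psd_carrier[OF L_psd] intro!: mult_carrier_mat pinv_Suc_carrier)

lemma Lseq_quadratic_form:
  "k \<le> c \<Longrightarrow> y \<in> carrier_vec (dims k) \<Longrightarrow>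
    y \<bullet> (Lseq L P k *\<^sub>v y) = (Pup N P k *\<^sub>v y) \<bullet> (L *\<^sub>v (Pup N P k *\<^sub>v y))"
proof (induction k arbitrary: y)
  case 0
  then show ?case using sym_psd_carrier[OF L_psd] dims_0 by simp
next
  case (Suc k)
  let ?B = "mp_pinv (P (Suc k))"
  have B: "?B \<in> carrier_mat (dims k) (dims (Suc k))" using Suc.prems(1) pinv_Suc_carrier by simp
  have "y \<bullet> (Lseq L P (Suc k) *\<^sub>v y) = (?B *\<^sub>v y) \<bullet> (Lseq L P k *\<^sub>v (?B *\<^sub>v y))"
    using quadratic_form_transpose_mult_mult[OF B Lseq_carrier Suc.prems(2)] Suc.prems(1) by simp
  also have "\<dots> = (Pup N P (Suc k) *\<^sub>v y) \<bullet> (L *\<^sub>v (Pup N P (Suc k) *\<^sub>v y))"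
    using Suc B Pup_carrier[of k] by simp
  finally show ?case .
qed

lemma mnorm_Lseq: "k \<le> c \<Longrightarrow> y \<in> carrier_vec (dims k) \<Longrightarrow> mnorm (Lseq L P k) y = mnorm L (Pup N P k *\<^sub>v y)"
  unfolding mnorm_def using Lseq_quadratic_form by simp

lemma residual_Suc:
  assumes x: "x \<in> carrier_vec N" and k: "k < c"
  shows "x - Pup N P (Suc k) *\<^sub>v xseq x P (Suc k) = (x - Pup N P k *\<^sub>v xseq x P k)
    + Pup N P k *\<^sub>v ((1\<^sub>m (dims k) - mp_pinv (P (Suc k)) * P (Suc k)) *\<^sub>v xseq x P k)"
proof -
  let ?U = "Pup N P k" and ?X = "xseq x P k" and ?B = "mp_pinv (P (Suc k))" and ?P = "P (Suc k)"
  have U: "?U \<in> carrier_mat N (dims k)" using k Pup_carrier by simp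
  have X: "?X \<in> carrier_vec (dims k)" using k x xseq_carrier by simp
  have B: "?B \<in> carrier_mat (dims k) (dims (Suc k))" using k pinv_Suc_carrier by simp
  have Pk: "?P \<in> carrier_mat (dims (Suc k)) (dims k)" using k P_Suc_carrier by simp
  have BPX: "?B *\<^sub>v (?P *\<^sub>v ?X) \<in> carrier_vec (dims k)" using B Pk X by simp
  have "(1\<^sub>m (dims k) - ?B * ?P) *\<^sub>v ?X = ?X - ?B *\<^sub>v (?P *\<^sub>v ?X)"
    using minus_mult_distrib_mat_vec[of "1\<^sub>m (dims k)" "dims k" "dims k" "?B * ?P" ?X] B Pk X by simp
  hence "?U *\<^sub>v ((1\<^sub>m (dims k) - ?B * ?P) *\<^sub>v ?X) = ?U *\<^sub>v ?X - ?U *\<^sub>v (?B *\<^sub>v (?P *\<^sub>v ?X))"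
    using mult_minus_distrib_mat_vec[OF U X BPX] by simp
  moreover have "Pup N P (Suc k) *\<^sub>v xseq x P (Suc k) = ?U *\<^sub>v (?B *\<^sub>v (?P *\<^sub>v ?X))"
    using U B Pk X by simp
  ultimately show ?thesis using x U X BPX by (intro eq_vecI) auto
qed

lemma mnorm_residual_le:
  assumes x: "x \<in> carrier_vec N"
    and \<sigma>_nonneg: "\<And>l. l \<in> {1..c} \<Longrightarrow> \<sigma> l \<ge> 0"
    and hyp: "\<And>l. l \<in> {1..c} \<Longrightarrow>
        mnorm (Lseq L P (l - 1))
          ((1\<^sub>m (dims (l - 1)) - mp_pinv (P l) * P l) *\<^sub>v xseq x P (l - 1))
        \<le> \<sigma> l * mnorm (Lseq L P (l - 1)) (xseq x P (l - 1))"
  shows "k \<le> c \<Longrightarrow> mnorm L (x - Pup N P k *\<^sub>v xseq x P k) + mnorm L x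
    \<le> (\<Prod>l = 1..k. 1 + \<sigma> l) * mnorm L x"
proof (induction k)
  case 0
  have "L *\<^sub>v 0\<^sub>v N \<in> carrier_vec N" using sym_psd_carrier[OF L_psd] by simp
  then show ?case using x dims_0 by (simp add: mnorm_def)
next
  case (Suc k)
  let ?U = "Pup N P k" and ?X = "xseq x P k"
    and ?w = "(1\<^sub>m (dims k) - mp_pinv (P (Suc k)) * P (Suc k)) *\<^sub>v xseq x P k"
  define r where "r = x - ?U *\<^sub>v ?X"
  have k: "k < c" using Suc.prems by simp
  have U: "?U \<in> carrier_mat N (dims k)" using k Pup_carrier by simp
  have X: "?X \<in> carrier_vec (dims k)" using k x xseq_carrier by simp
  have w: "?w \<in> carrier_vec (dims k)"
    using X pinv_Suc_carrier[OF k] P_Suc_carrier[OF k] by (intro mult_mat_vec_carrier) auto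
  have r: "r \<in> carrier_vec N" unfolding r_def using x U X by simp
  have \<sigma>: "\<sigma> (Suc k) \<ge> 0" using k \<sigma>_nonneg by simp
  have "mnorm L (?U *\<^sub>v ?w) \<le> \<sigma> (Suc k) * mnorm L (?U *\<^sub>v ?X)"
    using hyp[of "Suc k"] k mnorm_Lseq[of k] w X by simp
  also have "mnorm L (?U *\<^sub>v ?X) \<le> mnorm L x + mnorm L r"
  proof -
    have "?U *\<^sub>v ?X = x + - r" unfolding r_def using x U X by (intro eq_vecI) auto
    thus ?thesis using mnorm_add_le[OF L_psd x, of "- r"] mnorm_uminus[OF sym_psd_carrier[OF L_psd] r] r
      by simp
  qed
  finally have "mnorm L (?U *\<^sub>v ?w) \<le> \<sigma> (Suc k) * (mnorm L x + mnorm L r)"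
    using \<sigma> by (simp add: mult_left_mono)
  moreover have "mnorm L (x - Pup N P (Suc k) *\<^sub>v xseq x P (Suc k)) \<le> mnorm L r + mnorm L (?U *\<^sub>v ?w)"
    using residual_Suc[OF x k] mnorm_add_le[OF L_psd r, of "?U *\<^sub>v ?w"] U w unfolding r_def by simp
  ultimately have "mnorm L (x - Pup N P (Suc k) *\<^sub>v xseq x P (Suc k)) + mnorm L x
      \<le> (1 + \<sigma> (Suc k)) * (mnorm L r + mnorm L x)"
    by (simp add: algebra_simps)
  also have "\<dots> \<le> (1 + \<sigma> (Suc k)) * ((\<Prod>l = 1..k. 1 + \<sigma> l) * mnorm L x)"
    using Suc k \<sigma> unfolding r_def by (intro mult_left_mono) auto
  finally show ?case by (simp add: prod.cl_ivl_Suc mult_ac)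
qed

end

theorem lemma3:
  fixes N c :: nat and dims :: "nat \<Rightarrow> nat" and L :: "real mat"
    and P :: "nat \<Rightarrow> real mat" and x :: "real vec" and \<sigma> :: "nat \<Rightarrow> real"
  assumes L: "sym_psd N L"
    and d0: "dims 0 = N"
    and Pdim: "\<And>l. l \<in> {1..c} \<Longrightarrow> P l \<in> carrier_mat (dims l) (dims (l - 1))"
    and Prank: "\<And>l. l \<in> {1..c} \<Longrightarrow> full_row_rank (P l)"
    and x: "x \<in> carrier_vec N"
    and \<sigma>pos: "\<And>l. l \<in> {1..c} \<Longrightarrow> \<sigma> l \<ge> 0"
    and hyp: "\<And>l. l \<in> {1..c} \<Longrightarrow>
        mnorm (Lseq L P (l - 1))
          ((1\<^sub>m (dims (l - 1)) - mp_pinv (P l) * P l) *\<^sub>v xseq x P (l - 1))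
        \<le> \<sigma> l * mnorm (Lseq L P (l - 1)) (xseq x P (l - 1))"
  shows "mnorm L ((1\<^sub>m N - Pup N P c * Pdown N P c) *\<^sub>v x)
           \<le> (\<Sum>l = 1..c. \<sigma> l * (\<Prod>q = 1..l - 1. 1 + \<sigma> q)) * mnorm L x
       \<and> (\<Sum>l = 1..c. \<sigma> l * (\<Prod>q = 1..l - 1. 1 + \<sigma> q)) = (\<Prod>l = 1..c. 1 + \<sigma> l) - 1"
proof -
  interpret coarsening_chain N c dims P L
    using L d0 Pdim Prank by unfold_locales
  have U: "Pup N P c \<in> carrier_mat N (dims c)" and D: "Pdown N P c \<in> carrier_mat (dims c) N"
    using Pup_carrier Pdown_carrier by auto
  have "(1\<^sub>m N - Pup N P c * Pdown N P c) *\<^sub>v x = x - Pup N P c *\<^sub>v xseq x P c"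
    using minus_mult_distrib_mat_vec[of "1\<^sub>m N" N N "Pup N P c * Pdown N P c" x] U D x
      xseq_eq_Pdown[OF x] by simp
  moreover have "mnorm L (x - Pup N P c *\<^sub>v xseq x P c) \<le> ((\<Prod>l = 1..c. 1 + \<sigma> l) - 1) * mnorm L x"
    using mnorm_residual_le[OF x \<sigma>pos hyp, of c] by (simp add: algebra_simps)
  ultimately show ?thesis using sum_mult_prod_Suc_eq_prod_minus_1[of \<sigma> c] by simp
qed

end
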